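(* Let $(\zeta_j)_{j\in\mathbb Z}$ be i.i.d. positive random variables with finite mean $\mu$, $\omega_0:=0$, $\omega_k:=\omega_{k-1}+\zeta_k$ ($k\in\mathbb Z$), with law $P$. Let $(\xi_i)_{i\ge1}$ be i.i.d. $\mathbb Z$-valued with density $(p_k)$ satisfying $p_k=p_{-k}$, $p_{k+1}\le p_k$ for $k\ge0$, and $\sum_kk^2p_k\in(0,\infty)$; $S_0:=0$, $S_n:=\sum_{i=1}^n\xi_i$, with law $Q$, and $m_2:=\lim_nE_Q(S_n^2)/n$. For fixed $\omega$ let $Y_n:=\omega_{S_n}$ and let $Q_\omega$ be the law of $(Y_n)$ induced by $Q$. Then for $P$-a.e. $\omega$, $Y_n/\sqrt n\to\mathcal N(0,\mu^2m_2)$ in distribution under $Q_\omega$ as $n\to\infty$.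
   Context: $\mathcal N(0,\sigma^2)$ is the centered normal law with variance $\sigma^2$. *)

theory Defs
  imports "HOL-Probability.Probability"
begin

definition env :: "(int \<Rightarrow> 'a \<Rightarrow> real) \<Rightarrow> 'a \<Rightarrow> int \<Rightarrow> real" where
  "env \<zeta> x k = (if k \<ge> 0 then (\<Sum>j\<in>{1..k}. \<zeta> j x) else - (\<Sum>j\<in>{k+1..0}. \<zeta> j x))"

definition walk :: "(nat \<Rightarrow> 'b \<Rightarrow> int) \<Rightarrow> nat \<Rightarrow> 'b \<Rightarrow> int" where
  "walk \<xi> n y = (\<Sum>i\<in>{1..n}. \<xi> i y)"

end

theory Submission
  imports Defs
begin

text \<open>
  By the strong law of large numbers, applied separately to \<open>\<zeta>\<^sub>1, \<zeta>\<^sub>2, \<dots>\<close> and to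
  \<open>\<zeta>\<^sub>0, \<zeta>\<^sub>-\<^sub>1, \<dots>\<close>, almost every environment grows linearly:
  \<open>|\<omega>\<^sub>k - \<mu> k| \<le> \<delta> |k| + C\<^sub>\<delta>\<close> for every \<open>\<delta> > 0\<close>.
  For such a fixed \<open>\<omega>\<close>, \<open>\<omega>\<^sub>S\<^sub>n / \<surd>n = \<mu> S\<^sub>n / \<surd>n + o(1 + |S\<^sub>n| / \<surd>n)\<close>, so the
  quenched limit follows from the central limit theorem for \<open>S\<^sub>n\<close> (variance \<open>m\<^sub>2 = E \<xi>\<^sup>2\<close>)
  via a Skorohod representation.

  The strong law is not in the library; it is proved by Etemadi's argument for nonnegative
  variables: truncate \<open>X\<^sub>i\<close> at level \<open>i + 1\<close> (Borel--Cantelli shows this changes only finitely many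
  terms), bound the second moments of the centred truncated means along the sparse indices
  \<open>\<lfloor>\<alpha>\<^sup>m\<rfloor>\<close>, and interpolate between them using monotonicity of the partial sums.
\<close>

section \<open>Elementary real analysis\<close>

lemma cesaro_tendsto:
  fixes a :: "nat \<Rightarrow> real"
  assumes "a \<longlonglongrightarrow> L"
  shows "(\<lambda>n. (\<Sum>i<n. a i) / real n) \<longlonglongrightarrow> L"
proof (rule LIMSEQ_I)
  fix r :: real assume r: "r > 0"
  obtain N where N: "\<And>n. n \<ge> N \<Longrightarrow> norm (a n - L) < r/2"
    using LIMSEQ_D[OF assms, of "r/2"] r by auto
  define B where "B = (\<Sum>i<N. norm (a i - L))"
  have "(\<lambda>n. B / real n) \<longlonglongrightarrow> 0" by (rule lim_const_over_n)
  then obtain N2 where N2: "\<And>n. n \<ge> N2 \<Longrightarrow> norm (B / real n) < r/2"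
    using LIMSEQ_D[of _ 0 "r/2"] r by force
  show "\<exists>no. \<forall>n\<ge>no. norm ((\<Sum>i<n. a i) / real n - L) < r"
  proof (intro exI allI impI)
    fix n assume n: "n \<ge> max (Suc N) N2"
    hence npos: "real n > 0" by simp
    have eq: "(\<Sum>i<n. a i) / real n - L = (\<Sum>i<n. a i - L) / real n"
      using npos by (simp add: sum_subtractf field_simps)
    have split: "{..<n} = {..<N} \<union> {N..<n}" using n by auto
    have "norm (\<Sum>i<n. a i - L) \<le> (\<Sum>i<n. norm (a i - L))" by (rule norm_sum)
    also have "\<dots> = B + (\<Sum>i\<in>{N..<n}. norm (a i - L))"
      unfolding B_def split by (subst sum.union_disjoint) auto
    also have "(\<Sum>i\<in>{N..<n}. norm (a i - L)) \<le> (\<Sum>i\<in>{N..<n}. r/2)"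
      using N by (intro sum_mono) (simp add: less_imp_le)
    also have "\<dots> \<le> real n * (r/2)" using r by simp
    finally have "norm (\<Sum>i<n. a i - L) \<le> B + real n * (r/2)" by simp
    hence "norm ((\<Sum>i<n. a i - L) / real n) \<le> B / real n + r/2"
      using npos by (simp add: field_simps norm_divide)
    also have "B / real n < r/2" using N2[of n] n by (simp add: abs_less_iff B_def sum_nonneg)
    finally show "norm ((\<Sum>i<n. a i) / real n - L) < r" using eq by simp
  qed
qed

lemma linear_growth_bound:
  fixes a :: "nat \<Rightarrow> real"
  assumes lim: "(\<lambda>n. a n / real n) \<longlonglongrightarrow> m" and d: "\<delta> > 0"
  obtains C where "C \<ge> 0" "\<And>n. \<bar>a n - m * real n\<bar> \<le> \<delta> * real n + C"
proof -
  obtain N where N: "\<And>n. n \<ge> N \<Longrightarrow> \<bar>a n / real n - m\<bar> < \<delta>"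
    using LIMSEQ_D[OF lim d] by auto
  define C where "C = (\<Sum>n<Suc N. \<bar>a n - m * real n\<bar>)"
  have "\<bar>a n - m * real n\<bar> \<le> \<delta> * real n + C" for n
  proof (cases "n \<le> N")
    case True
    hence "\<bar>a n - m * real n\<bar> \<le> C" unfolding C_def
      by (intro member_le_sum) auto
    thus ?thesis using d by (simp add: add_increasing)
  next
    case False
    hence np: "real n > 0" by simp
    have "\<bar>a n - m * real n\<bar> = real n * \<bar>a n / real n - m\<bar>"
      using np by (simp add: field_simps abs_mult[symmetric])
    also have "\<dots> \<le> real n * \<delta>" using N[of n] False np by (intro mult_left_mono) auto
    finally show ?thesis by (simp add: C_def sum_nonneg mult.commute add_increasing2)
  qed
  moreover have "C \<ge> 0" unfolding C_def by (simp add: sum_nonneg)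
  ultimately show ?thesis using that by blast
qed

definition geom_floor :: "real \<Rightarrow> nat \<Rightarrow> nat" where
  "geom_floor \<alpha> m = nat \<lfloor>\<alpha> ^ m\<rfloor>"

lemma geom_floor_bounds:
  assumes "\<alpha> > 1"
  shows "real (geom_floor \<alpha> m) \<le> \<alpha> ^ m" "real (geom_floor \<alpha> m) > \<alpha> ^ m - 1"
    "real (geom_floor \<alpha> m) \<ge> 1" "geom_floor \<alpha> m > 0" "2 * real (geom_floor \<alpha> m) \<ge> \<alpha> ^ m"
proof -
  have "\<alpha> ^ m \<ge> 1" using assms by (simp add: one_le_power)
  hence f1: "\<lfloor>\<alpha> ^ m\<rfloor> \<ge> 1" by (simp add: le_floor_iff)
  have e: "real (geom_floor \<alpha> m) = real_of_int \<lfloor>\<alpha> ^ m\<rfloor>" using f1 by (simp add: geom_floor_def)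
  show "real (geom_floor \<alpha> m) \<le> \<alpha> ^ m" unfolding e by simp
  show g: "real (geom_floor \<alpha> m) > \<alpha> ^ m - 1" unfolding e by linarith
  show g1: "real (geom_floor \<alpha> m) \<ge> 1" unfolding e using f1 by simp
  thus "geom_floor \<alpha> m > 0" by simp
  show "2 * real (geom_floor \<alpha> m) \<ge> \<alpha> ^ m" using g g1 by linarith
qed

lemma filterlim_geom_floor:
  assumes "\<alpha> > 1"
  shows "filterlim (geom_floor \<alpha>) at_top sequentially"
proof -
  have "filterlim (\<lambda>m. \<alpha> ^ m) at_top sequentially"
    using assms by (intro filterlim_at_infinity_imp_filterlim_at_top filterlim_realpow_sequentially_gt1) auto
  hence "filterlim (\<lambda>m. -1 + \<alpha> ^ m) at_top sequentially"
    by (intro filterlim_tendsto_add_at_top[OF tendsto_const])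
  hence "filterlim (\<lambda>m. real (geom_floor \<alpha> m)) at_top sequentially"
    by (rule filterlim_at_top_mono)
       (use geom_floor_bounds[OF assms] in \<open>auto intro!: always_eventually less_imp_le simp: algebra_simps\<close>)
  thus ?thesis by (simp add: filterlim_real_sequentially filterlim_sequentially_iff_filterlim_real)
qed

lemma geom_floor_ratio_tendsto:
  assumes a: "\<alpha> > 1"
  shows "(\<lambda>m. real (geom_floor \<alpha> (Suc m)) / real (geom_floor \<alpha> m)) \<longlonglongrightarrow> \<alpha>"
proof -
  have "(\<lambda>m. (1/\<alpha>) ^ m) \<longlonglongrightarrow> 0" using a by (intro LIMSEQ_power_zero) auto
  hence lo: "(\<lambda>m. 1 - (1/\<alpha>) ^ m) \<longlonglongrightarrow> 1" using tendsto_diff[OF tendsto_const, of _ 0 _ 1] by simp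
  have r: "(\<lambda>m. real (geom_floor \<alpha> m) / \<alpha> ^ m) \<longlonglongrightarrow> 1"
  proof (rule tendsto_sandwich[OF _ _ lo tendsto_const])
    show "\<forall>\<^sub>F m in sequentially. 1 - (1/\<alpha>) ^ m \<le> real (geom_floor \<alpha> m) / \<alpha> ^ m"
    proof (intro always_eventually allI)
      fix m
      have pos: "\<alpha> ^ m > 0" using a by simp
      have "1 - (1/\<alpha>) ^ m = (\<alpha> ^ m - 1) / \<alpha> ^ m" using pos a by (simp add: power_divide diff_divide_distrib)
      also have "\<dots> \<le> real (geom_floor \<alpha> m) / \<alpha> ^ m"
        using geom_floor_bounds(2)[OF a, of m] pos by (intro divide_right_mono) auto
      finally show "1 - (1/\<alpha>) ^ m \<le> real (geom_floor \<alpha> m) / \<alpha> ^ m" .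
    qed
    show "\<forall>\<^sub>F m in sequentially. real (geom_floor \<alpha> m) / \<alpha> ^ m \<le> 1"
      using geom_floor_bounds(1)[OF a] a by (intro always_eventually allI) (simp add: divide_le_eq_1)
  qed
  have lim: "(\<lambda>m. (real (geom_floor \<alpha> (Suc m)) / \<alpha> ^ (Suc m)) * \<alpha> / (real (geom_floor \<alpha> m) / \<alpha> ^ m))
      \<longlonglongrightarrow> 1 * \<alpha> / 1"
    by (intro tendsto_intros r LIMSEQ_Suc[OF r]) auto
  have "(\<lambda>m. (real (geom_floor \<alpha> (Suc m)) / \<alpha> ^ (Suc m)) * \<alpha> / (real (geom_floor \<alpha> m) / \<alpha> ^ m))
      = (\<lambda>m. real (geom_floor \<alpha> (Suc m)) / real (geom_floor \<alpha> m))"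
    using a geom_floor_bounds(4)[OF a] by (auto simp: field_simps)
  with lim show ?thesis by simp
qed

lemma geom_floor_inverse_tail:
  assumes a: "\<alpha> > 1" and v: "v > 0"
  shows "summable (\<lambda>m. if v \<le> real (geom_floor \<alpha> m) then 1 / real (geom_floor \<alpha> m) else 0)"
    and "(\<Sum>m. if v \<le> real (geom_floor \<alpha> m) then 1 / real (geom_floor \<alpha> m) else 0)
           \<le> 2 * \<alpha> / ((\<alpha> - 1) * v)"
proof -
  define f where "f m = (if v \<le> real (geom_floor \<alpha> m) then 1 / real (geom_floor \<alpha> m) else 0)" for m
  have ex: "\<exists>m. v \<le> \<alpha> ^ m" using real_arch_pow[OF a, of v] by (auto intro: less_imp_le)
  define m0 where "m0 = (LEAST m. v \<le> \<alpha> ^ m)"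
  have m0: "v \<le> \<alpha> ^ m0" unfolding m0_def using ex by (rule LeastI_ex)
  define h where "h m = (if m0 \<le> m then 2 / \<alpha> ^ m else 0)" for m
  have fh: "norm (f m) \<le> h m" for m
  proof (cases "v \<le> real (geom_floor \<alpha> m)")
    case True
    hence "v \<le> \<alpha> ^ m" using geom_floor_bounds(1)[OF a, of m] by simp
    hence "m0 \<le> m" unfolding m0_def by (rule Least_le)
    moreover have "1 / real (geom_floor \<alpha> m) \<le> 2 / \<alpha> ^ m"
      using geom_floor_bounds(3,5)[OF a, of m] a by (simp add: field_simps)
    ultimately show ?thesis using True geom_floor_bounds(3)[OF a, of m] by (simp add: f_def h_def)
  next
    case False thus ?thesis using a by (simp add: f_def h_def)
  qed
  define H where "H = 2 / \<alpha> ^ m0 * (1 / (1 - 1/\<alpha>))"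
  have "(\<lambda>j. 2 / \<alpha> ^ m0 * (1/\<alpha>) ^ j) sums H"
    unfolding H_def using a by (intro sums_mult geometric_sums) auto
  moreover have "(\<lambda>j. h (j + m0)) = (\<lambda>j. 2 / \<alpha> ^ m0 * (1/\<alpha>) ^ j)"
    by (auto simp: h_def power_add power_divide)
  ultimately have "(\<lambda>j. h (j + m0)) sums H" by simp
  hence hs: "h sums H" by (subst (asm) sums_zero_iff_shift) (auto simp: h_def)
  show "summable (\<lambda>m. if v \<le> real (geom_floor \<alpha> m) then 1 / real (geom_floor \<alpha> m) else 0)"
    using summable_comparison_test[OF _ sums_summable[OF hs], of f] fh unfolding f_def by auto
  hence "suminf f \<le> suminf h" using fh sums_summable[OF hs] unfolding f_def[symmetric]
    by (intro suminf_le) (auto intro: order_trans[OF abs_ge_self])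
  also have "suminf h = H" using hs by (rule sums_unique[symmetric])
  also have "H = 2 * \<alpha> / ((\<alpha> - 1) * \<alpha> ^ m0)" using a by (simp add: H_def field_simps)
  also have "\<dots> \<le> 2 * \<alpha> / ((\<alpha> - 1) * v)" using a v m0
    by (intro divide_left_mono mult_left_mono mult_pos_pos) auto
  finally show "(\<Sum>m. if v \<le> real (geom_floor \<alpha> m) then 1 / real (geom_floor \<alpha> m) else 0)
      \<le> 2 * \<alpha> / ((\<alpha> - 1) * v)"
    unfolding f_def .
qed

lemma eventually_between_consecutive:
  fixes k :: "nat \<Rightarrow> nat"
  assumes "filterlim k at_top sequentially"
  shows "eventually (\<lambda>n. \<exists>m\<ge>M. k m \<le> n \<and> n < k (Suc m)) sequentially"
proof -
  define N where "N = Max (k ` {..M})"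
  have kN: "m \<le> M \<Longrightarrow> k m \<le> N" for m unfolding N_def by (intro Max_ge) auto
  have "\<exists>m\<ge>M. k m \<le> n \<and> n < k (Suc m)" if n: "n \<ge> N" for n
  proof -
    have "eventually (\<lambda>m. Suc n \<le> k m) sequentially" using assms by (simp add: filterlim_at_top)
    hence ex: "\<exists>m. n < k m" unfolding eventually_sequentially by (metis Suc_le_lessD order.refl)
    define m' where "m' = (LEAST m. n < k m)"
    have m'1: "n < k m'" unfolding m'_def using ex by (rule LeastI_ex)
    have m'2: "m < m' \<Longrightarrow> k m \<le> n" for m unfolding m'_def using not_less_Least by fastforce
    have "m' > M" using kN[of m'] m'1 n by (cases "m' \<le> M") auto
    then obtain m where "m' = Suc m" "m \<ge> M" by (cases m') auto
    thus ?thesis using m'1 m'2[of m] by auto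
  qed
  thus ?thesis unfolding eventually_sequentially by blast
qed

lemma monotone_ratio_eventually_between:
  fixes T :: "nat \<Rightarrow> real" and k :: "nat \<Rightarrow> nat"
  assumes mono: "mono T" and nonneg: "\<And>n. T n \<ge> 0"
    and kpos: "\<And>m. k m > 0" and klim: "filterlim k at_top sequentially"
    and conv: "(\<lambda>m. T (k m) / real (k m)) \<longlonglongrightarrow> L"
    and ratio: "(\<lambda>m. real (k (Suc m)) / real (k m)) \<longlonglongrightarrow> \<alpha>" and apos: "\<alpha> > 0"
    and dpos: "\<delta> > 0"
  shows "eventually (\<lambda>n. L / \<alpha> - \<delta> < T n / real n \<and> T n / real n < L * \<alpha> + \<delta>) sequentially"
proof -
  define u where "u m = T (k (Suc m)) / real (k m)" for m
  define l where "l m = T (k m) / real (k (Suc m))" for m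
  have "(\<lambda>m. T (k (Suc m)) / real (k (Suc m)) * (real (k (Suc m)) / real (k m))) \<longlonglongrightarrow> L * \<alpha>"
    by (intro tendsto_mult ratio LIMSEQ_Suc[OF conv])
  moreover have "T (k (Suc m)) / real (k (Suc m)) * (real (k (Suc m)) / real (k m)) = u m" for m
    using kpos[of "Suc m"] by (simp add: u_def)
  ultimately have ul: "u \<longlonglongrightarrow> L * \<alpha>" by simp
  have "(\<lambda>m. (T (k m) / real (k m)) / (real (k (Suc m)) / real (k m))) \<longlonglongrightarrow> L / \<alpha>"
    using apos by (intro tendsto_divide ratio conv) auto
  moreover have "(T (k m) / real (k m)) / (real (k (Suc m)) / real (k m)) = l m" for m
    using kpos[of m] by (simp add: l_def)
  ultimately have ll: "l \<longlonglongrightarrow> L / \<alpha>" by simp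
  have "eventually (\<lambda>m. u m < L * \<alpha> + \<delta> \<and> l m > L / \<alpha> - \<delta>) sequentially"
    using order_tendstoD(2)[OF ul, of "L * \<alpha> + \<delta>"] order_tendstoD(1)[OF ll, of "L / \<alpha> - \<delta>"] dpos
    by (auto elim: eventually_elim2)
  then obtain M where M: "\<And>m. m \<ge> M \<Longrightarrow> u m < L * \<alpha> + \<delta> \<and> l m > L / \<alpha> - \<delta>"
    by (auto simp: eventually_sequentially)
  show ?thesis using eventually_between_consecutive[OF klim, of M]
  proof eventually_elim
    case (elim n)
    then obtain m where m: "m \<ge> M" and km: "k m \<le> n" "n < k (Suc m)" by blast
    have npos: "n > 0" using km(1) kpos[of m] by simp
    have "T n / real n \<le> T (k (Suc m)) / real (k m)"
      using mono km npos kpos[of m] nonneg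
      by (intro frac_le) (auto simp: mono_def)
    also have "\<dots> < L * \<alpha> + \<delta>" using M[OF m] by (simp add: u_def)
    finally have "T n / real n < L * \<alpha> + \<delta>" .
    moreover have "T (k m) / real (k (Suc m)) \<le> T n / real n"
      using mono km npos nonneg
      by (intro frac_le) (auto simp: mono_def)
    with M[OF m] have "L / \<alpha> - \<delta> < T n / real n" by (simp add: l_def)
    ultimately show ?case by simp
  qed
qed

lemma monotone_ratio_tendsto_of_geom_floor:
  fixes T :: "nat \<Rightarrow> real" and \<alpha> :: "nat \<Rightarrow> real"
  assumes mono: "mono T" and nonneg: "\<And>n. T n \<ge> 0"
    and a1: "\<And>j. \<alpha> j > 1" and alim: "\<alpha> \<longlonglongrightarrow> 1"
    and conv: "\<And>j. (\<lambda>m. T (geom_floor (\<alpha> j) m) / real (geom_floor (\<alpha> j) m)) \<longlonglongrightarrow> L"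
  shows "(\<lambda>n. T n / real n) \<longlonglongrightarrow> L"
proof -
  have between: "eventually (\<lambda>n. L / \<alpha> j - \<delta> < T n / real n \<and> T n / real n < L * \<alpha> j + \<delta>) sequentially"
    if "\<delta> > 0" for j \<delta>
    using a1[of j] that
    by (intro monotone_ratio_eventually_between[OF mono nonneg geom_floor_bounds(4)[OF a1]
          filterlim_geom_floor[OF a1] conv geom_floor_ratio_tendsto[OF a1]]) auto
  show ?thesis
  proof (rule order_tendstoI)
    fix b assume b: "L < b"
    have "(\<lambda>j. L * \<alpha> j) \<longlonglongrightarrow> L * 1" by (intro tendsto_intros alim)
    hence "eventually (\<lambda>j. L * \<alpha> j < b) sequentially" using b by (intro order_tendstoD) auto
    then obtain j where j: "L * \<alpha> j < b" by (auto simp: eventually_sequentially)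
    hence "b - L * \<alpha> j > 0" by simp
    from between[OF this, of j]
    show "eventually (\<lambda>n. T n / real n < b) sequentially" by eventually_elim simp
  next
    fix a assume a: "a < L"
    have "(\<lambda>j. L / \<alpha> j) \<longlonglongrightarrow> L / 1" by (intro tendsto_intros alim) auto
    hence "eventually (\<lambda>j. a < L / \<alpha> j) sequentially" using a by (intro order_tendstoD) auto
    then obtain j where j: "a < L / \<alpha> j" by (auto simp: eventually_sequentially)
    hence "L / \<alpha> j - a > 0" by simp
    from between[OF this, of j]
    show "eventually (\<lambda>n. T n / real n > a) sequentially" by eventually_elim simp
  qed
qed

section \<open>The strong law of large numbers for nonnegative i.i.d.\ variables\<close>

definition trunc :: "nat \<Rightarrow> real \<Rightarrow> real" where
  "trunc i v = (if v \<le> real (Suc i) then v else 0)"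

lemma trunc_measurable[measurable]: "trunc i \<in> borel_measurable borel"
  unfolding trunc_def by measurable

lemma trunc_bounds: "0 \<le> v \<Longrightarrow> 0 \<le> trunc i v" "0 \<le> v \<Longrightarrow> trunc i v \<le> v" "trunc i v \<le> real (Suc i)"
  by (auto simp: trunc_def)

lemma sum_indicator_greater_Suc_le:
  fixes v :: real
  assumes "0 \<le> v"
  shows "(\<Sum>n<N. indicator {x. x > real (Suc n)} v) \<le> v"
proof (induction N)
  case 0 thus ?case using assms by simp
next
  case (Suc N)
  have "(\<Sum>n<N. indicator {x. x > real (Suc n)} v) \<le> real N"
    using sum_bounded_above[of "{..<N}" "\<lambda>n. indicator {x. x > real (Suc n)} v :: real" 1]
    by (simp add: indicator_def)
  thus ?case using Suc by (cases "v > real (Suc N)") auto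
qed

lemma trunc_square_sum_bound:
  assumes a: "\<alpha> > 1" and v: "v \<ge> 0"
  shows "(\<Sum>i<geom_floor \<alpha> m. (trunc i v)\<^sup>2) / (real (geom_floor \<alpha> m))\<^sup>2
      \<le> (if v \<le> real (geom_floor \<alpha> m) then v\<^sup>2 * (1 / real (geom_floor \<alpha> m)) else 0)"
proof (cases "v \<le> real (geom_floor \<alpha> m)")
  case True
  have kp: "real (geom_floor \<alpha> m) > 0" using geom_floor_bounds(4)[OF a, of m] by simp
  have "(\<Sum>i<geom_floor \<alpha> m. (trunc i v)\<^sup>2) \<le> (\<Sum>i<geom_floor \<alpha> m. v\<^sup>2)"
    by (intro sum_mono power_mono trunc_bounds v)
  also have "\<dots> = real (geom_floor \<alpha> m) * v\<^sup>2" by simp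
  finally have "(\<Sum>i<geom_floor \<alpha> m. (trunc i v)\<^sup>2) / (real (geom_floor \<alpha> m))\<^sup>2
      \<le> real (geom_floor \<alpha> m) * v\<^sup>2 / (real (geom_floor \<alpha> m))\<^sup>2"
    using kp by (intro divide_right_mono) auto
  also have "\<dots> = v\<^sup>2 * (1 / real (geom_floor \<alpha> m))" using kp by (simp add: power2_eq_square field_simps)
  finally show ?thesis using True by simp
next
  case False
  have "trunc i v = 0" if "i < geom_floor \<alpha> m" for i
  proof -
    have "real (Suc i) \<le> real (geom_floor \<alpha> m)" using that by linarith
    thus ?thesis using False by (simp add: trunc_def)
  qed
  thus ?thesis using False by simp
qed

lemma suminf_trunc_square_sum_le:
  assumes a: "\<alpha> > 1" and v: "v \<ge> 0"
  shows "(\<Sum>m. ennreal ((\<Sum>i<geom_floor \<alpha> m. (trunc i v)\<^sup>2) / (real (geom_floor \<alpha> m))\<^sup>2))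
      \<le> ennreal (2 * \<alpha> / (\<alpha> - 1) * v)"
proof (cases "v = 0")
  case True thus ?thesis by (simp add: trunc_def)
next
  case False
  hence vp: "v > 0" using v by simp
  define f where "f m = (if v \<le> real (geom_floor \<alpha> m) then 1 / real (geom_floor \<alpha> m) else 0)" for m
  have fs: "summable f" unfolding f_def by (rule geom_floor_inverse_tail(1)[OF a vp])
  have fnn: "f m \<ge> 0" for m unfolding f_def by simp
  have "(\<Sum>m. ennreal ((\<Sum>i<geom_floor \<alpha> m. (trunc i v)\<^sup>2) / (real (geom_floor \<alpha> m))\<^sup>2))
      \<le> (\<Sum>m. ennreal (v\<^sup>2 * f m))"
  proof (intro suminf_le summableI ennreal_leI)
    fix m
    show "(\<Sum>i<geom_floor \<alpha> m. (trunc i v)\<^sup>2) / (real (geom_floor \<alpha> m))\<^sup>2 \<le> v\<^sup>2 * f m"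
      using trunc_square_sum_bound[OF a v, of m] unfolding f_def by (auto split: if_splits)
  qed
  also have "\<dots> = ennreal (\<Sum>m. v\<^sup>2 * f m)"
    using fnn fs by (intro suminf_ennreal2 mult_nonneg_nonneg summable_mult) auto
  also have "(\<Sum>m. v\<^sup>2 * f m) = v\<^sup>2 * (\<Sum>m. f m)" by (rule suminf_mult[OF fs])
  also have "\<dots> \<le> v\<^sup>2 * (2 * \<alpha> / ((\<alpha> - 1) * v))"
    by (intro mult_left_mono) (use geom_floor_inverse_tail(2)[OF a vp] in \<open>auto simp: f_def\<close>)
  also have "\<dots> = 2 * \<alpha> / (\<alpha> - 1) * v" using vp a by (simp add: power2_eq_square field_simps)
  finally show ?thesis by (simp add: ennreal_leI)
qed

lemma (in prob_space) bounded_square_integrable: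
  fixes f :: "'a \<Rightarrow> real"
  assumes [measurable]: "f \<in> borel_measurable M" and b: "\<And>x. x \<in> space M \<Longrightarrow> \<bar>f x\<bar> \<le> B"
  shows "integrable M (\<lambda>x. (f x)\<^sup>2)"
proof (rule integrable_const_bound[where B="B\<^sup>2"])
  have "norm ((f x)\<^sup>2) \<le> B\<^sup>2" if "x \<in> space M" for x
    using power_mono[OF b[OF that], of 2] by simp
  thus "AE x in M. norm ((f x)\<^sup>2) \<le> B\<^sup>2" by (intro AE_I2)
qed simp

lemma (in prob_space) expectation_square_sum_indep:
  fixes V :: "nat \<Rightarrow> 'a \<Rightarrow> real"
  assumes ind: "indep_vars (\<lambda>_. borel) V UNIV"
    and sq: "\<And>i. integrable M (\<lambda>x. (V i x)\<^sup>2)"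
    and mz: "\<And>i. expectation (V i) = 0"
  shows "integrable M (\<lambda>x. (\<Sum>i<n. V i x)\<^sup>2)
    \<and> expectation (\<lambda>x. (\<Sum>i<n. V i x)\<^sup>2) = (\<Sum>i<n. expectation (\<lambda>x. (V i x)\<^sup>2))"
proof (induction n)
  case 0 thus ?case by simp
next
  case (Suc n)
  have meas[measurable]: "V i \<in> borel_measurable M" for i
    using ind unfolding indep_vars_def2 by auto
  have intV: "integrable M (V i)" for i by (rule square_integrable_imp_integrable[OF meas sq])
  define S where "S x = (\<Sum>i<n. V i x)" for x
  have intS: "integrable M S" unfolding S_def using intV by auto
  have intS2: "integrable M (\<lambda>x. (S x)\<^sup>2)" using Suc by (simp add: S_def)
  have indep: "indep_var borel (V n) borel S"
    unfolding S_def[abs_def] by (rule indep_vars_sum) (auto intro: indep_vars_subset[OF ind])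
  have intSV: "integrable M (\<lambda>x. V n x * S x)"
    by (rule indep_var_integrable[OF indep intV intS])
  have ESV: "expectation (\<lambda>x. V n x * S x) = 0"
    using indep_var_lebesgue_integral[OF indep intV intS] mz[of n] by simp
  have e: "(\<lambda>x. (\<Sum>i<Suc n. V i x)\<^sup>2) = (\<lambda>x. (S x)\<^sup>2 + 2 * (V n x * S x) + (V n x)\<^sup>2)"
    by (auto simp: S_def power2_eq_square algebra_simps)
  show ?case
    unfolding e using Suc intS2 intSV sq[of n] ESV by (simp add: S_def)
qed

lemma (in prob_space) indep_sets_reindex:
  assumes ind: "indep_sets F I" and inj: "inj_on g J" and sub: "g ` J \<subseteq> I"
  shows "indep_sets (\<lambda>j. F (g j)) J"
  unfolding indep_sets_def
proof (intro conjI ballI allI impI)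
  fix j assume "j \<in> J" thus "F (g j) \<subseteq> events" using ind sub unfolding indep_sets_def by auto
next
  fix K A assume K: "K \<subseteq> J" "K \<noteq> {}" "finite K" and A: "A \<in> Pi K (\<lambda>j. F (g j))"
  have injK: "inj_on g K" using inj K(1) by (rule inj_on_subset)
  define B where "B i = A (the_inv_into K g i)" for i
  have Bg: "k \<in> K \<Longrightarrow> B (g k) = A k" for k unfolding B_def using injK by (simp add: the_inv_into_f_f)
  have "B \<in> Pi (g ` K) F" using A Bg by auto
  moreover have "g ` K \<subseteq> I" "g ` K \<noteq> {}" "finite (g ` K)" using K sub by auto
  ultimately have "prob (\<Inter>i\<in>g ` K. B i) = (\<Prod>i\<in>g ` K. prob (B i))"
    using ind unfolding indep_sets_def by blast
  moreover have "(\<Inter>i\<in>g ` K. B i) = (\<Inter>k\<in>K. A k)" using Bg by auto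
  moreover have "(\<Prod>i\<in>g ` K. prob (B i)) = (\<Prod>k\<in>K. prob (A k))"
    using injK Bg by (simp add: prod.reindex)
  ultimately show "prob (\<Inter>j\<in>K. A j) = (\<Prod>j\<in>K. prob (A j))" by simp
qed

lemma (in prob_space) indep_vars_reindex:
  assumes ind: "indep_vars M' X I" and inj: "inj_on g J" and sub: "g ` J \<subseteq> I"
  shows "indep_vars (\<lambda>j. M' (g j)) (\<lambda>j. X (g j)) J"
  using ind sub unfolding indep_vars_def2
  by (auto intro: indep_sets_reindex[OF _ inj sub, where F="\<lambda>i. {X i -` A \<inter> space M |A. A \<in> sets (M' i)}"])

lemma (in prob_space) integral_eq_of_distr_eq:
  fixes X Y :: "'a \<Rightarrow> real" and g :: "real \<Rightarrow> real"
  assumes [measurable]: "X \<in> borel_measurable M" "Y \<in> borel_measurable M" "g \<in> borel_measurable borel"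
    and eq: "distr M borel X = distr M borel Y"
  shows "(\<integral>x. g (X x) \<partial>M) = (\<integral>x. g (Y x) \<partial>M)"
  by (metis eq integral_distr assms(1-3))

lemma (in prob_space) integrable_iff_of_distr_eq:
  fixes X Y :: "'a \<Rightarrow> real" and g :: "real \<Rightarrow> real"
  assumes [measurable]: "X \<in> borel_measurable M" "Y \<in> borel_measurable M" "g \<in> borel_measurable borel"
    and eq: "distr M borel X = distr M borel Y"
  shows "integrable M (\<lambda>x. g (X x)) \<longleftrightarrow> integrable M (\<lambda>x. g (Y x))"
  by (metis eq integrable_distr_eq assms(1-3))

locale nonneg_iid = prob_space +
  fixes X :: "nat \<Rightarrow> 'a \<Rightarrow> real"
  assumes indep: "indep_vars (\<lambda>_. borel) X UNIV"
    and ident: "\<And>i. distr M borel (X i) = distr M borel (X 0)"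
    and nonneg: "\<And>i x. x \<in> space M \<Longrightarrow> X i x \<ge> 0"
    and integrable_X0: "integrable M (X 0)"
begin

lemma X_measurable[measurable]: "X i \<in> borel_measurable M"
  using indep unfolding indep_vars_def2 by auto

lemma integral_X_eq:
  fixes g :: "real \<Rightarrow> real"
  assumes [measurable]: "g \<in> borel_measurable borel"
  shows "(\<integral>x. g (X i x) \<partial>M) = (\<integral>x. g (X 0 x) \<partial>M)"
  using integral_eq_of_distr_eq[OF X_measurable[of i] X_measurable[of 0] assms ident] .

definition Y :: "nat \<Rightarrow> 'a \<Rightarrow> real" where "Y i x = trunc i (X i x)"
definition EY :: "nat \<Rightarrow> real" where "EY i = expectation (Y i)"
definition W :: "nat \<Rightarrow> 'a \<Rightarrow> real" where "W i x = Y i x - EY i"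

lemma Y_measurable[measurable]: "Y i \<in> borel_measurable M"
  unfolding Y_def by measurable

lemma W_measurable[measurable]: "W i \<in> borel_measurable M"
  unfolding W_def by measurable

lemma Y_bounds: "x \<in> space M \<Longrightarrow> 0 \<le> Y i x" "Y i x \<le> real (Suc i)"
  by (simp_all add: Y_def trunc_bounds nonneg del: of_nat_Suc)

lemma integrable_Y: "integrable M (Y i)"
  by (rule integrable_const_bound[where B="real (Suc i)"]) (use Y_bounds in auto)

lemma W_bound: "x \<in> space M \<Longrightarrow> \<bar>W i x\<bar> \<le> real (Suc i) + \<bar>EY i\<bar>"
  using Y_bounds[where i=i and x=x] unfolding W_def by linarith

lemma W_indep: "indep_vars (\<lambda>_. borel) W UNIV"
  unfolding W_def[abs_def] Y_def[abs_def] by (rule indep_vars_compose2[OF indep]) simp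

lemma expectation_W: "expectation (W i) = 0"
  using integrable_Y[of i] unfolding W_def[abs_def] EY_def by (simp add: prob_space)

lemma expectation_W_square_le: "expectation (\<lambda>x. (W i x)\<^sup>2) \<le> expectation (\<lambda>x. (trunc i (X 0 x))\<^sup>2)"
proof -
  have intY2: "integrable M (\<lambda>x. (Y i x)\<^sup>2)"
    by (rule bounded_square_integrable[where B="real (Suc i)"]) (use Y_bounds in auto)
  have "(\<lambda>x. (W i x)\<^sup>2) = (\<lambda>x. (Y i x)\<^sup>2 - 2 * EY i * Y i x + (EY i)\<^sup>2)"
    by (auto simp: W_def power2_eq_square algebra_simps)
  hence "expectation (\<lambda>x. (W i x)\<^sup>2) = expectation (\<lambda>x. (Y i x)\<^sup>2) - (EY i)\<^sup>2"
    using intY2 integrable_Y[of i] by (simp add: EY_def prob_space power2_eq_square)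
  also have "\<dots> \<le> expectation (\<lambda>x. (Y i x)\<^sup>2)" by simp
  also have "\<dots> = expectation (\<lambda>x. (trunc i (X 0 x))\<^sup>2)"
    unfolding Y_def by (rule integral_X_eq) simp
  finally show ?thesis .
qed

lemma expectation_square_sum_W_le:
  "expectation (\<lambda>x. (\<Sum>i<n. W i x)\<^sup>2) \<le> (\<Sum>i<n. expectation (\<lambda>x. (trunc i (X 0 x))\<^sup>2))"
proof -
  have "integrable M (\<lambda>x. (W i x)\<^sup>2)" for i
    by (rule bounded_square_integrable[OF _ W_bound]) simp_all
  thus ?thesis
    using expectation_square_sum_indep[OF W_indep _ expectation_W, of n]
    by (simp add: sum_mono expectation_W_square_le)
qed

lemma AE_eventually_X_eq_Y: "AE x in M. eventually (\<lambda>n. X n x = Y n x) sequentially"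
proof -
  define A where "A n = {x \<in> space M. X n x > real (Suc n)}" for n
  have A_sets[measurable]: "A n \<in> sets M" for n unfolding A_def by measurable
  have prob_A: "measure M (A n) = (\<integral>x. indicator {v. v > real (Suc n)} (X 0 x) \<partial>M)" for n
  proof -
    have "measure M (A n) = (\<integral>x. indicator (A n) x \<partial>M)"
      using A_sets by (simp add: integral_indicator)
    also have "\<dots> = (\<integral>x. indicator {v. v > real (Suc n)} (X n x) \<partial>M)"
      unfolding A_def by (intro Bochner_Integration.integral_cong) (auto simp: indicator_def)
    also have "\<dots> = (\<integral>x. indicator {v. v > real (Suc n)} (X 0 x) \<partial>M)"
      by (rule integral_X_eq) simp
    finally show ?thesis .
  qed
  have "summable (\<lambda>n. measure M (A n))"
  proof (rule summableI_nonneg_bounded)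
    fix N
    have card_le: "card ({..<N} \<inter> S) \<le> N" for S :: "nat set"
      by (metis card_lessThan Int_lower1 card_mono finite_lessThan)
    have "(\<Sum>n<N. measure M (A n)) = (\<integral>x. (\<Sum>n<N. indicator {v. v > real (Suc n)} (X 0 x)) \<partial>M)"
      unfolding prob_A
      by (subst Bochner_Integration.integral_sum) (auto intro!: integrable_const_bound[where B=1] simp: indicator_def)
    also have "\<dots> \<le> (\<integral>x. X 0 x \<partial>M)"
      by (intro integral_mono integrable_X0 sum_indicator_greater_Suc_le nonneg)
         (auto intro!: integrable_const_bound[where B="real N"] simp: indicator_def card_le)
    finally show "(\<Sum>n<N. measure M (A n)) \<le> (\<integral>x. X 0 x \<partial>M)" .
  qed simp
  hence "AE x in M. eventually (\<lambda>n. x \<in> space M - A n) sequentially"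
    by (intro borel_cantelli_AE1) (auto simp: emeasure_eq_measure)
  thus ?thesis
    by (rule AE_mp) (auto intro!: AE_I2 elim!: eventually_mono simp: A_def Y_def trunc_def)
qed

lemma EY_tendsto: "EY \<longlonglongrightarrow> expectation (X 0)"
proof -
  have "EY = (\<lambda>i. expectation (\<lambda>x. trunc i (X 0 x)))"
    unfolding EY_def Y_def[abs_def] by (intro ext integral_X_eq) simp
  moreover have "(\<lambda>i. expectation (\<lambda>x. trunc i (X 0 x))) \<longlonglongrightarrow> expectation (X 0)"
  proof (rule integral_dominated_convergence[where w="X 0"])
    show "AE x in M. (\<lambda>i. trunc i (X 0 x)) \<longlonglongrightarrow> X 0 x"
    proof (intro AE_I2 tendsto_eventually)
      fix x
      have "trunc i (X 0 x) = X 0 x" if "i \<ge> nat \<lceil>X 0 x\<rceil>" for i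
      proof -
        from that have "X 0 x \<le> real (Suc i)" by linarith
        thus ?thesis by (simp add: trunc_def)
      qed
      thus "eventually (\<lambda>i. trunc i (X 0 x) = X 0 x) sequentially"
        unfolding eventually_sequentially by blast
    qed
    show "AE x in M. norm (trunc i (X 0 x)) \<le> X 0 x" for i
      by (intro AE_I2) (use nonneg trunc_bounds in \<open>auto\<close>)
  qed (auto intro: integrable_X0)
  ultimately show ?thesis by simp
qed

lemma integrable_trunc_X0_square: "integrable M (\<lambda>x. (trunc i (X 0 x))\<^sup>2)"
  by (rule bounded_square_integrable[where B="real (Suc i)"]) (use nonneg trunc_bounds in auto)

lemma expectation_square_mean_W_le:
  "expectation (\<lambda>x. ((\<Sum>i<n. W i x) / real n)\<^sup>2)
     \<le> expectation (\<lambda>x. (\<Sum>i<n. (trunc i (X 0 x))\<^sup>2) / (real n)\<^sup>2)"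
proof -
  have "expectation (\<lambda>x. ((\<Sum>i<n. W i x) / real n)\<^sup>2) = expectation (\<lambda>x. (\<Sum>i<n. W i x)\<^sup>2) / (real n)\<^sup>2"
    by (simp add: power_divide)
  also have "\<dots> \<le> (\<Sum>i<n. expectation (\<lambda>x. (trunc i (X 0 x))\<^sup>2)) / (real n)\<^sup>2"
    by (intro divide_right_mono expectation_square_sum_W_le) simp
  also have "\<dots> = expectation (\<lambda>x. (\<Sum>i<n. (trunc i (X 0 x))\<^sup>2) / (real n)\<^sup>2)"
    by (simp add: integrable_trunc_X0_square)
  finally show ?thesis .
qed

lemma nn_integral_suminf_square_mean_W_finite:
  assumes a: "\<alpha> > 1"
  shows "(\<integral>\<^sup>+x. (\<Sum>m. ennreal (((\<Sum>i<geom_floor \<alpha> m. W i x) / real (geom_floor \<alpha> m))\<^sup>2)) \<partial>M) \<noteq> \<infinity>"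
proof -
  define k where "k = geom_floor \<alpha>"
  define Z where "Z m x = (\<Sum>i<k m. W i x) / real (k m)" for m x
  define G where "G m v = (\<Sum>i<k m. (trunc i v)\<^sup>2) / (real (k m))\<^sup>2" for m v
  have [measurable]: "Z m \<in> borel_measurable M" "(\<lambda>x. G m (X 0 x)) \<in> borel_measurable M" for m
    unfolding Z_def G_def by measurable
  have G_nonneg: "G m v \<ge> 0" for m v unfolding G_def by (intro divide_nonneg_nonneg sum_nonneg) auto
  have integrable_Z_square: "integrable M (\<lambda>x. (Z m x)\<^sup>2)" for m
  proof (rule bounded_square_integrable[where B="(\<Sum>i<k m. real (Suc i) + \<bar>EY i\<bar>) / real (k m)"])
    fix x assume x: "x \<in> space M"
    have "\<bar>\<Sum>i<k m. W i x\<bar> \<le> (\<Sum>i<k m. real (Suc i) + \<bar>EY i\<bar>)"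
      by (rule order_trans[OF sum_abs sum_mono]) (rule W_bound[OF x])
    thus "\<bar>Z m x\<bar> \<le> (\<Sum>i<k m. real (Suc i) + \<bar>EY i\<bar>) / real (k m)"
      unfolding Z_def abs_divide abs_of_nat by (rule divide_right_mono) simp
  qed simp
  have integrable_G: "integrable M (\<lambda>x. G m (X 0 x))" for m
    unfolding G_def by (intro integrable_divide_zero Bochner_Integration.integrable_sum integrable_trunc_X0_square)
  have "(\<integral>\<^sup>+x. (\<Sum>m. ennreal ((Z m x)\<^sup>2)) \<partial>M) = (\<Sum>m. ennreal (expectation (\<lambda>x. (Z m x)\<^sup>2)))"
    by (subst nn_integral_suminf) (auto intro!: suminf_cong nn_integral_eq_integral integrable_Z_square)
  also have "\<dots> \<le> (\<Sum>m. ennreal (expectation (\<lambda>x. G m (X 0 x))))"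
    unfolding Z_def G_def by (intro suminf_le summableI ennreal_leI expectation_square_mean_W_le)
  also have "\<dots> = \<integral>\<^sup>+x. (\<Sum>m. ennreal (G m (X 0 x))) \<partial>M"
    by (subst nn_integral_suminf) (auto intro!: suminf_cong nn_integral_eq_integral[symmetric] integrable_G G_nonneg)
  also have "\<dots> \<le> \<integral>\<^sup>+x. ennreal (2 * \<alpha> / (\<alpha> - 1) * X 0 x) \<partial>M"
    unfolding G_def k_def by (intro nn_integral_mono suminf_trunc_square_sum_le[OF a nonneg])
  also have "\<dots> = ennreal (expectation (\<lambda>x. 2 * \<alpha> / (\<alpha> - 1) * X 0 x))"
    using a nonneg by (intro nn_integral_eq_integral) (auto intro!: integrable_X0)
  finally show ?thesis unfolding Z_def k_def by (auto simp: top_unique)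
qed

lemma AE_mean_W_geom_floor_tendsto_0:
  assumes "\<alpha> > 1"
  shows "AE x in M. (\<lambda>m. (\<Sum>i<geom_floor \<alpha> m. W i x) / real (geom_floor \<alpha> m)) \<longlonglongrightarrow> 0"
proof -
  have "AE x in M. (\<Sum>m. ennreal (((\<Sum>i<geom_floor \<alpha> m. W i x) / real (geom_floor \<alpha> m))\<^sup>2)) \<noteq> \<infinity>"
    by (rule nn_integral_PInf_AE[OF _ nn_integral_suminf_square_mean_W_finite[OF assms]]) measurable
  thus ?thesis
  proof (rule AE_mp[OF _ AE_I2], intro impI)
    fix x
    let ?Z = "\<lambda>m. (\<Sum>i<geom_floor \<alpha> m. W i x) / real (geom_floor \<alpha> m)"
    assume "(\<Sum>m. ennreal ((?Z m)\<^sup>2)) \<noteq> \<infinity>"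
    hence "summable (\<lambda>m. (?Z m)\<^sup>2)" by (intro summable_suminf_not_top) auto
    hence "(\<lambda>m. sqrt ((?Z m)\<^sup>2)) \<longlonglongrightarrow> sqrt 0" by (intro tendsto_real_sqrt summable_LIMSEQ_zero)
    hence "(\<lambda>m. \<bar>?Z m\<bar>) \<longlonglongrightarrow> 0" by simp
    thus "?Z \<longlonglongrightarrow> 0" by (simp only: tendsto_rabs_zero_iff)
  qed
qed

lemma AE_mean_Y_geom_floor_tendsto:
  assumes a: "\<alpha> > 1"
  shows "AE x in M. (\<lambda>m. (\<Sum>i<geom_floor \<alpha> m. Y i x) / real (geom_floor \<alpha> m)) \<longlonglongrightarrow> expectation (X 0)"
  using AE_mean_W_geom_floor_tendsto_0[OF a]
proof (rule AE_mp[OF _ AE_I2], intro impI)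
  fix x assume z: "(\<lambda>m. (\<Sum>i<geom_floor \<alpha> m. W i x) / real (geom_floor \<alpha> m)) \<longlonglongrightarrow> 0"
  have c: "(\<lambda>m. (\<Sum>i<geom_floor \<alpha> m. EY i) / real (geom_floor \<alpha> m)) \<longlonglongrightarrow> expectation (X 0)"
    using filterlim_compose[OF cesaro_tendsto[OF EY_tendsto] filterlim_geom_floor[OF a]] by (simp add: o_def)
  have "(\<Sum>i<geom_floor \<alpha> m. Y i x) / real (geom_floor \<alpha> m)
      = (\<Sum>i<geom_floor \<alpha> m. W i x) / real (geom_floor \<alpha> m) + (\<Sum>i<geom_floor \<alpha> m. EY i) / real (geom_floor \<alpha> m)"
    for m by (simp add: W_def sum_subtractf add_divide_distrib[symmetric])
  with tendsto_add[OF z c]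
  show "(\<lambda>m. (\<Sum>i<geom_floor \<alpha> m. Y i x) / real (geom_floor \<alpha> m)) \<longlonglongrightarrow> expectation (X 0)" by simp
qed

theorem strong_law_of_large_numbers:
  "AE x in M. (\<lambda>n. (\<Sum>i<n. X i x) / real n) \<longlonglongrightarrow> expectation (X 0)"
proof -
  define \<alpha> where "\<alpha> j = 1 + 1 / real (Suc j)" for j
  have \<alpha>_gt_1: "\<alpha> j > 1" for j by (simp add: \<alpha>_def)
  have \<alpha>_tendsto: "\<alpha> \<longlonglongrightarrow> 1"
    unfolding \<alpha>_def[abs_def] using tendsto_add[OF tendsto_const LIMSEQ_inverse_real_of_nat, of 1]
    by (simp add: inverse_eq_divide)
  have "AE x in M. \<forall>j. (\<lambda>m. (\<Sum>i<geom_floor (\<alpha> j) m. Y i x) / real (geom_floor (\<alpha> j) m)) \<longlonglongrightarrow> expectation (X 0)"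
    by (subst AE_all_countable) (auto intro: AE_mean_Y_geom_floor_tendsto \<alpha>_gt_1)
  with AE_eventually_X_eq_Y AE_space show ?thesis
  proof eventually_elim
    case (elim x)
    define T where "T n = (\<Sum>i<n. Y i x)" for n
    have T_nonneg: "T n \<ge> 0" for n unfolding T_def using Y_bounds(1)[OF elim(2)] by (simp add: sum_nonneg)
    have T_mono: "mono T" unfolding mono_def T_def
      by (auto intro!: sum_mono2 Y_bounds(1)[OF elim(2)])
    have T_tendsto: "(\<lambda>n. T n / real n) \<longlonglongrightarrow> expectation (X 0)"
      using monotone_ratio_tendsto_of_geom_floor[OF T_mono T_nonneg \<alpha>_gt_1 \<alpha>_tendsto] elim(3)
      by (simp add: T_def)
    obtain N where N: "\<And>n. n \<ge> N \<Longrightarrow> X n x = Y n x" using elim(1) by (auto simp: eventually_sequentially)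
    define c where "c = (\<Sum>i<N. X i x - Y i x)"
    have "eventually (\<lambda>n. T n / real n + c / real n = (\<Sum>i<n. X i x) / real n) sequentially"
      unfolding eventually_sequentially
    proof (intro exI allI impI)
      fix n assume n: "n \<ge> N"
      have "(\<Sum>i<n. X i x - Y i x) = c"
        unfolding c_def using n N by (intro sum.mono_neutral_right) auto
      hence "(\<Sum>i<n. X i x) = T n + c" by (simp add: T_def sum_subtractf)
      thus "T n / real n + c / real n = (\<Sum>i<n. X i x) / real n" by (simp add: add_divide_distrib)
    qed
    moreover have "(\<lambda>n. T n / real n + c / real n) \<longlonglongrightarrow> expectation (X 0) + 0"
      by (intro tendsto_add T_tendsto lim_const_over_n)
    ultimately show ?case by (auto intro: Lim_transform_eventually)
  qed
qed

end

lemma (in prob_space) strong_law_reindexed: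
  fixes \<zeta> :: "'i \<Rightarrow> 'a \<Rightarrow> real" and g :: "nat \<Rightarrow> 'i"
  assumes indep_\<zeta>: "indep_vars (\<lambda>_. borel) \<zeta> UNIV"
    and ident_\<zeta>: "\<And>j. distr M borel (\<zeta> j) = distr M borel (\<zeta> j0)"
    and nonneg_\<zeta>: "\<And>j x. x \<in> space M \<Longrightarrow> \<zeta> j x \<ge> 0"
    and integrable_\<zeta>: "integrable M (\<zeta> j0)"
    and inj: "inj g"
  shows "AE x in M. (\<lambda>n. (\<Sum>i<n. \<zeta> (g i) x) / real n) \<longlonglongrightarrow> expectation (\<zeta> j0)"
proof -
  have [measurable]: "\<zeta> j \<in> borel_measurable M" for j
    using indep_\<zeta> unfolding indep_vars_def2 by auto
  have same_expectation: "expectation (\<zeta> (g 0)) = expectation (\<zeta> j0)"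
    by (rule integral_eq_of_distr_eq[where g="\<lambda>v. v", OF _ _ _ ident_\<zeta>]) measurable
  have same_integrability: "integrable M (\<zeta> (g 0)) \<longleftrightarrow> integrable M (\<zeta> j0)"
    by (rule integrable_iff_of_distr_eq[where g="\<lambda>v. v", OF _ _ _ ident_\<zeta>]) measurable
  interpret nonneg_iid M "\<lambda>i. \<zeta> (g i)"
  proof
    show "indep_vars (\<lambda>_. borel) (\<lambda>i. \<zeta> (g i)) UNIV"
      using indep_vars_reindex[OF indep_\<zeta> inj] by simp
    show "distr M borel (\<zeta> (g i)) = distr M borel (\<zeta> (g 0))" for i
      using ident_\<zeta>[of "g i"] ident_\<zeta>[of "g 0"] by (simp only:)
    show "integrable M (\<zeta> (g 0))"
      using same_integrability integrable_\<zeta> by simp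
  qed (rule nonneg_\<zeta>)
  show ?thesis using strong_law_of_large_numbers unfolding same_expectation .
qed

section \<open>Asymptotically linear environments\<close>

definition asymptotically_linear :: "real \<Rightarrow> (int \<Rightarrow> real) \<Rightarrow> bool" where
  "asymptotically_linear c f \<longleftrightarrow>
     (\<forall>\<delta>>0. \<exists>C. \<forall>k. \<bar>f k - c * real_of_int k\<bar> \<le> \<delta> * \<bar>real_of_int k\<bar> + C)"

lemma env_nonneg_eq:
  assumes "k \<ge> 0"
  shows "env \<zeta> x k = (\<Sum>i<nat k. \<zeta> (int i + 1) x)"
  using assms unfolding env_def
  by (auto intro!: sum.reindex_bij_witness[of _ "\<lambda>i. int i + 1" "\<lambda>j. nat (j - 1)"])

lemma env_neg_eq:
  assumes "k < 0"
  shows "env \<zeta> x k = - (\<Sum>i<nat (-k). \<zeta> (- int i) x)"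
  using assms unfolding env_def
  by (auto intro!: sum.reindex_bij_witness[of _ "\<lambda>i. - int i" "\<lambda>j. nat (- j)"])

lemma asymptotically_linear_env:
  assumes pos: "(\<lambda>n. (\<Sum>i<n. \<zeta> (int i + 1) x) / real n) \<longlonglongrightarrow> \<mu>"
    and neg: "(\<lambda>n. (\<Sum>i<n. \<zeta> (- int i) x) / real n) \<longlonglongrightarrow> \<mu>"
  shows "asymptotically_linear \<mu> (env \<zeta> x)"
  unfolding asymptotically_linear_def
proof (intro allI impI)
  fix \<delta> :: real assume d: "\<delta> > 0"
  obtain C1 where C1: "C1 \<ge> 0" "\<And>n. \<bar>(\<Sum>i<n. \<zeta> (int i + 1) x) - \<mu> * real n\<bar> \<le> \<delta> * real n + C1"
    using linear_growth_bound[OF pos d] by blast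
  obtain C2 where C2: "C2 \<ge> 0" "\<And>n. \<bar>(\<Sum>i<n. \<zeta> (- int i) x) - \<mu> * real n\<bar> \<le> \<delta> * real n + C2"
    using linear_growth_bound[OF neg d] by blast
  have "\<bar>env \<zeta> x k - \<mu> * real_of_int k\<bar> \<le> \<delta> * \<bar>real_of_int k\<bar> + (C1 + C2)" for k
  proof (cases "k \<ge> 0")
    case True
    thus ?thesis using C1(2)[of "nat k"] C2(1) by (simp add: env_nonneg_eq)
  next
    case False
    thus ?thesis using C2(2)[of "nat (-k)"] C1(1) by (simp add: env_neg_eq abs_minus_commute)
  qed
  thus "\<exists>C. \<forall>k. \<bar>env \<zeta> x k - \<mu> * real_of_int k\<bar> \<le> \<delta> * \<bar>real_of_int k\<bar> + C" by blast
qed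

lemma AE_asymptotically_linear_env:
  fixes M :: "'a measure" and \<zeta> :: "int \<Rightarrow> 'a \<Rightarrow> real"
  assumes P: "prob_space M"
    and indep: "prob_space.indep_vars M (\<lambda>_. borel) \<zeta> UNIV"
    and ident: "\<And>j. distr M borel (\<zeta> j) = distr M borel (\<zeta> 0)"
    and pos: "\<And>j x. x \<in> space M \<Longrightarrow> \<zeta> j x > 0"
    and integrable: "integrable M (\<zeta> 0)"
  shows "AE x in M. asymptotically_linear (integral\<^sup>L M (\<zeta> 0)) (env \<zeta> x)"
proof -
  interpret prob_space M by (rule P)
  have nonneg: "\<And>j x. x \<in> space M \<Longrightarrow> \<zeta> j x \<ge> 0" using pos by (simp add: less_imp_le)
  have "AE x in M. (\<lambda>n. (\<Sum>i<n. \<zeta> (int i + 1) x) / real n) \<longlonglongrightarrow> expectation (\<zeta> 0)"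
    by (rule strong_law_reindexed[OF indep ident nonneg integrable]) (auto simp: inj_on_def)
  moreover have "AE x in M. (\<lambda>n. (\<Sum>i<n. \<zeta> (- int i) x) / real n) \<longlonglongrightarrow> expectation (\<zeta> 0)"
    by (rule strong_law_reindexed[OF indep ident nonneg integrable]) (auto simp: inj_on_def)
  ultimately show ?thesis by eventually_elim (rule asymptotically_linear_env)
qed

section \<open>Weak convergence of asymptotically linear images\<close>

lemma inverse_sqrt_tendsto_0: "(\<lambda>n. 1 / sqrt (real n)) \<longlonglongrightarrow> 0"
proof -
  have "(\<lambda>n. sqrt (1 / real n)) \<longlonglongrightarrow> sqrt 0" by (intro tendsto_real_sqrt lim_inverse_n')
  thus ?thesis by (simp add: real_sqrt_divide)
qed

lemma tendsto_floor_over_sqrt: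
  assumes y: "y \<longlonglongrightarrow> L" and \<sigma>: "\<sigma> > 0"
  shows "(\<lambda>n. real_of_int \<lfloor>y n * sqrt (real n * \<sigma>\<^sup>2)\<rfloor> / sqrt (real n)) \<longlonglongrightarrow> \<sigma> * L"
proof -
  define q where "q n = real_of_int \<lfloor>y n * sqrt (real n * \<sigma>\<^sup>2)\<rfloor> / sqrt (real n)" for n
  have "(\<lambda>n. q n - y n * \<sigma>) \<longlonglongrightarrow> 0"
  proof (rule Lim_null_comparison[OF _ inverse_sqrt_tendsto_0])
    show "eventually (\<lambda>n. norm (q n - y n * \<sigma>) \<le> 1 / sqrt (real n)) sequentially"
      using eventually_gt_at_top[of 0]
    proof eventually_elim
      case (elim n)
      hence sp: "sqrt (real n) > 0" by simp
      have "q n - y n * \<sigma> = (real_of_int \<lfloor>y n * sqrt (real n * \<sigma>\<^sup>2)\<rfloor> - y n * sqrt (real n * \<sigma>\<^sup>2)) / sqrt (real n)"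
        using sp \<sigma> by (simp add: q_def real_sqrt_mult field_simps)
      moreover have "\<bar>real_of_int \<lfloor>y n * sqrt (real n * \<sigma>\<^sup>2)\<rfloor> - y n * sqrt (real n * \<sigma>\<^sup>2)\<bar> \<le> 1"
        by linarith
      ultimately show ?case using sp by (simp add: abs_divide divide_right_mono)
    qed
  qed
  from tendsto_add[OF this tendsto_mult_right[OF y, of \<sigma>]] show ?thesis
    by (simp add: q_def mult.commute)
qed

lemma asymptotically_linear_error_over_sqrt:
  fixes f :: "int \<Rightarrow> real" and K :: "nat \<Rightarrow> int"
  assumes lin: "asymptotically_linear c f"
    and q: "(\<lambda>n. real_of_int (K n) / sqrt (real n)) \<longlonglongrightarrow> l"
  shows "(\<lambda>n. (f (K n) - c * real_of_int (K n)) / sqrt (real n)) \<longlonglongrightarrow> 0"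
proof (rule LIMSEQ_I)
  fix \<epsilon> :: real assume \<epsilon>: "\<epsilon> > 0"
  define B where "B = \<bar>l\<bar> + 1"
  define \<delta> where "\<delta> = \<epsilon> / (2 * B)"
  have B: "B > 0" by (simp add: B_def add_nonneg_pos)
  hence \<delta>: "\<delta> > 0" "\<delta> * B = \<epsilon> / 2" using \<epsilon> by (simp_all add: \<delta>_def)
  obtain C where C: "\<And>k. \<bar>f k - c * real_of_int k\<bar> \<le> \<delta> * \<bar>real_of_int k\<bar> + C"
    using lin \<delta> unfolding asymptotically_linear_def by blast
  have "eventually (\<lambda>n. \<bar>real_of_int (K n) / sqrt (real n)\<bar> < B) sequentially"
    using tendsto_rabs[OF q] by (intro order_tendstoD) (auto simp: B_def)
  moreover have "(\<lambda>n. C * (1 / sqrt (real n))) \<longlonglongrightarrow> C * 0" by (intro tendsto_intros inverse_sqrt_tendsto_0)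
  hence "eventually (\<lambda>n. C * (1 / sqrt (real n)) < \<epsilon> / 2) sequentially"
    using \<epsilon> by (intro order_tendstoD) auto
  ultimately have "eventually (\<lambda>n. norm ((f (K n) - c * real_of_int (K n)) / sqrt (real n) - 0) < \<epsilon>) sequentially"
    using eventually_gt_at_top[of 0]
  proof eventually_elim
    case (elim n)
    hence sp: "sqrt (real n) > 0" by simp
    have "norm ((f (K n) - c * real_of_int (K n)) / sqrt (real n) - 0)
        = \<bar>f (K n) - c * real_of_int (K n)\<bar> / sqrt (real n)"
      using sp by (simp add: abs_divide)
    also have "\<dots> \<le> (\<delta> * \<bar>real_of_int (K n)\<bar> + C) / sqrt (real n)"
      using sp C by (intro divide_right_mono) auto
    also have "\<dots> = \<delta> * \<bar>real_of_int (K n) / sqrt (real n)\<bar> + C * (1 / sqrt (real n))"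
      using sp by (simp add: abs_divide field_simps)
    also have "\<dots> < \<delta> * B + \<epsilon> / 2"
      using elim \<delta> by (intro add_le_less_mono mult_left_mono) auto
    finally show ?case using \<delta> by simp
  qed
  thus "\<exists>no. \<forall>n\<ge>no. norm ((f (K n) - c * real_of_int (K n)) / sqrt (real n) - 0) < \<epsilon>"
    by (simp only: eventually_sequentially)
qed

lemma tendsto_asymptotically_linear_floor:
  fixes f :: "int \<Rightarrow> real" and y :: "nat \<Rightarrow> real"
  assumes lin: "asymptotically_linear c f" and y: "y \<longlonglongrightarrow> L" and \<sigma>: "\<sigma> > 0"
  shows "(\<lambda>n. f \<lfloor>y n * sqrt (real n * \<sigma>\<^sup>2)\<rfloor> / sqrt (real n)) \<longlonglongrightarrow> c * (\<sigma> * L)"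
proof -
  define K where "K n = \<lfloor>y n * sqrt (real n * \<sigma>\<^sup>2)\<rfloor>" for n
  have q: "(\<lambda>n. real_of_int (K n) / sqrt (real n)) \<longlonglongrightarrow> \<sigma> * L"
    unfolding K_def using y \<sigma> by (rule tendsto_floor_over_sqrt)
  have "(\<lambda>n. c * (real_of_int (K n) / sqrt (real n)) + (f (K n) - c * real_of_int (K n)) / sqrt (real n))
      \<longlonglongrightarrow> c * (\<sigma> * L) + 0"
    by (intro tendsto_intros q asymptotically_linear_error_over_sqrt[OF lin q])
  thus ?thesis by (simp add: K_def diff_divide_distrib)
qed

lemma (in prob_space) distr_scaled_std_normal:
  assumes [measurable]: "Y \<in> borel_measurable M" and Y: "distr M borel Y = std_normal_distribution"
    and s: "s > 0"
  shows "distr M lborel (\<lambda>x. s * Y x) = density lborel (normal_density 0 s)"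
proof -
  have "distr M lborel Y = distr M borel Y" by (rule distr_cong) auto
  hence "distributed M lborel Y (\<lambda>x. ennreal (normal_density 0 1 x))"
    unfolding distributed_def using Y by simp
  from normal_density_affine[OF this, of s 0]
  have "distributed M lborel (\<lambda>x. 0 + s * Y x) (\<lambda>x. ennreal (normal_density (0 + s * 0) (\<bar>s\<bar> * 1) x))"
    using s by simp
  thus ?thesis using s by (simp add: distributed_distr_eq_density)
qed

text \<open>Since \<open>S\<close> is integer valued, \<open>S = \<lfloor>(S / s) * s\<rfloor>\<close>, so \<open>f(S) / \<surd>n\<close> is a
  function of the normalised variable \<open>S / s\<close> with \<open>s = \<surd>(n \<sigma>\<^sup>2)\<close>.\<close>

lemma integral_distr_integer_valued_rescaled:
  fixes S :: "'b \<Rightarrow> int" and f :: "int \<Rightarrow> real" and g :: "real \<Rightarrow> real"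
  assumes [measurable]: "S \<in> measurable N (count_space UNIV)" "g \<in> borel_measurable borel"
    and \<sigma>: "\<sigma> > 0"
  shows "integral\<^sup>L (distr N borel (\<lambda>y. f (S y) / sqrt (real n))) g
       = integral\<^sup>L (distr N borel (\<lambda>y. real_of_int (S y) / sqrt (real n * \<sigma>\<^sup>2)))
           (\<lambda>u. g (f \<lfloor>u * sqrt (real n * \<sigma>\<^sup>2)\<rfloor> / sqrt (real n)))"
proof -
  have [measurable]: "(\<lambda>u. f \<lfloor>u * sqrt (real n * \<sigma>\<^sup>2)\<rfloor> / sqrt (real n)) \<in> borel_measurable borel"
    by (rule measurable_compose_countable[where f="\<lambda>i u. f i / sqrt (real n)"]) measurable
  have "integral\<^sup>L (distr N borel (\<lambda>y. f (S y) / sqrt (real n))) g = (\<integral>y. g (f (S y) / sqrt (real n)) \<partial>N)"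
    by (rule integral_distr) measurable
  also have "\<dots> = (\<integral>y. g (f \<lfloor>real_of_int (S y) / sqrt (real n * \<sigma>\<^sup>2) * sqrt (real n * \<sigma>\<^sup>2)\<rfloor> / sqrt (real n)) \<partial>N)"
    using \<sigma> by (cases "n = 0") simp_all
  also have "\<dots> = integral\<^sup>L (distr N borel (\<lambda>y. real_of_int (S y) / sqrt (real n * \<sigma>\<^sup>2)))
           (\<lambda>u. g (f \<lfloor>u * sqrt (real n * \<sigma>\<^sup>2)\<rfloor> / sqrt (real n)))"
    by (rule integral_distr[symmetric]) measurable
  finally show ?thesis .
qed

lemma integral_asymptotically_linear_image_tendsto:
  fixes N :: "'b measure" and S :: "nat \<Rightarrow> 'b \<Rightarrow> int" and f :: "int \<Rightarrow> real" and g :: "real \<Rightarrow> real"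
  assumes Q: "prob_space N" and S_measurable[measurable]: "\<And>n. S n \<in> measurable N (count_space UNIV)"
    and clt: "weak_conv_m (\<lambda>n. distr N borel (\<lambda>y. real_of_int (S n y) / sqrt (real n * \<sigma>\<^sup>2))) std_normal_distribution"
    and \<sigma>: "\<sigma> > 0" and c: "c > 0" and lin: "asymptotically_linear c f"
    and g_cont: "\<And>x. isCont g x" and g_bound: "\<And>x. \<bar>g x\<bar> \<le> 1"
  shows "(\<lambda>n. integral\<^sup>L (distr N borel (\<lambda>y. f (S n y) / sqrt (real n))) g)
           \<longlonglongrightarrow> integral\<^sup>L (density lborel (normal_density 0 (c * \<sigma>))) g"
proof -
  interpret Q: prob_space N by (rule Q)
  define \<mu> where "\<mu> n = distr N borel (\<lambda>y. real_of_int (S n y) / sqrt (real n * \<sigma>\<^sup>2))" for n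
  have \<mu>_real: "real_distribution (\<mu> n)" for n unfolding \<mu>_def by (intro Q.real_distribution_distr) measurable
  \<comment> \<open>Skorohod turns the weak convergence into pointwise convergence, to which the
    deterministic asymptotics of tendsto_asymptotically_linear_floor apply.\<close>
  from Skorohod[OF \<mu>_real real_dist_normal_dist clt[folded \<mu>_def]]
  obtain \<Omega> :: "real measure" and Z Zlim where
    "prob_space \<Omega>" and Z_measurable[measurable]: "\<And>n. Z n \<in> borel_measurable \<Omega>"
    and distr_Z: "\<And>n. distr \<Omega> borel (Z n) = \<mu> n" and "Zlim \<in> measurable \<Omega> lborel"
    and distr_Zlim: "distr \<Omega> borel Zlim = std_normal_distribution"
    and Z_tendsto: "\<And>x. x \<in> space \<Omega> \<Longrightarrow> (\<lambda>n. Z n x) \<longlonglongrightarrow> Zlim x"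
    by blast
  interpret \<Omega>: prob_space \<Omega> by fact
  have [measurable]: "Zlim \<in> borel_measurable \<Omega>" using \<open>Zlim \<in> measurable \<Omega> lborel\<close> by simp
  have [measurable]: "g \<in> borel_measurable borel"
    by (intro borel_measurable_continuous_onI continuous_at_imp_continuous_on) (auto intro: g_cont)
  define h where "h n u = g (f \<lfloor>u * sqrt (real n * \<sigma>\<^sup>2)\<rfloor> / sqrt (real n))" for n u
  have [measurable]: "h n \<in> borel_measurable borel" for n
    unfolding h_def by (rule measurable_compose_countable[where f="\<lambda>i u. g (f i / sqrt (real n))"]) measurable
  have "integral\<^sup>L (distr N borel (\<lambda>y. f (S n y) / sqrt (real n))) g = integral\<^sup>L (\<mu> n) (h n)" for n
    unfolding \<mu>_def h_def by (intro integral_distr_integer_valued_rescaled \<sigma>) measurable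
  moreover have "integral\<^sup>L (\<mu> n) (h n) = (\<integral>\<omega>. h n (Z n \<omega>) \<partial>\<Omega>)" for n
    unfolding distr_Z[symmetric] by (rule integral_distr) measurable
  moreover have "(\<lambda>n. \<integral>\<omega>. h n (Z n \<omega>) \<partial>\<Omega>) \<longlonglongrightarrow> (\<integral>\<omega>. g (c * \<sigma> * Zlim \<omega>) \<partial>\<Omega>)"
  proof (rule integral_dominated_convergence[where w="\<lambda>_. 1"])
    show "AE \<omega> in \<Omega>. (\<lambda>n. h n (Z n \<omega>)) \<longlonglongrightarrow> g (c * \<sigma> * Zlim \<omega>)"
    proof (rule AE_I2)
      fix \<omega> assume "\<omega> \<in> space \<Omega>"
      hence "(\<lambda>n. f \<lfloor>Z n \<omega> * sqrt (real n * \<sigma>\<^sup>2)\<rfloor> / sqrt (real n)) \<longlonglongrightarrow> c * (\<sigma> * Zlim \<omega>)"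
        by (intro tendsto_asymptotically_linear_floor lin Z_tendsto \<sigma>)
      thus "(\<lambda>n. h n (Z n \<omega>)) \<longlonglongrightarrow> g (c * \<sigma> * Zlim \<omega>)"
        unfolding h_def by (intro isCont_tendsto_compose[OF g_cont]) (simp add: mult.assoc)
    qed
    show "AE \<omega> in \<Omega>. norm (h n (Z n \<omega>)) \<le> 1" for n using g_bound by (simp add: h_def)
  qed measurable
  moreover have "(\<integral>\<omega>. g (c * \<sigma> * Zlim \<omega>) \<partial>\<Omega>) = integral\<^sup>L (distr \<Omega> lborel (\<lambda>x. c * \<sigma> * Zlim x)) g"
    by (rule integral_distr[symmetric]) measurable
  moreover have "integral\<^sup>L (distr \<Omega> lborel (\<lambda>x. c * \<sigma> * Zlim x)) g
      = integral\<^sup>L (density lborel (normal_density 0 (c * \<sigma>))) g"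
    using c \<sigma> by (subst \<Omega>.distr_scaled_std_normal[OF _ distr_Zlim]) simp_all
  ultimately show ?thesis by simp
qed

lemma weak_conv_asymptotically_linear_image:
  fixes N :: "'b measure" and S :: "nat \<Rightarrow> 'b \<Rightarrow> int" and f :: "int \<Rightarrow> real"
  assumes Q: "prob_space N" and S_measurable[measurable]: "\<And>n. S n \<in> measurable N (count_space UNIV)"
    and clt: "weak_conv_m (\<lambda>n. distr N borel (\<lambda>y. real_of_int (S n y) / sqrt (real n * \<sigma>\<^sup>2))) std_normal_distribution"
    and \<sigma>: "\<sigma> > 0" and c: "c > 0" and lin: "asymptotically_linear c f"
  shows "weak_conv_m (\<lambda>n. distr N borel (\<lambda>y. f (S n y) / sqrt (real n))) (density lborel (normal_density 0 (c * \<sigma>)))"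
proof (rule integral_bdd_continuous_conv_imp_weak_conv)
  show "real_distribution (distr N borel (\<lambda>y. f (S n y) / sqrt (real n)))" for n
    by (intro prob_space.real_distribution_distr[OF Q]) measurable
  have "c * \<sigma> > 0" using c \<sigma> by simp
  thus "real_distribution (density lborel (normal_density 0 (c * \<sigma>)))"
    unfolding real_distribution_def real_distribution_axioms_def by (simp add: prob_space_normal_density)
qed (rule integral_asymptotically_linear_image_tendsto[OF assms])

section \<open>The random walk and the main theorem\<close>

lemma (in prob_space) expectation_pos:
  fixes f :: "'a \<Rightarrow> real"
  assumes "integrable M f" and pos: "\<And>x. x \<in> space M \<Longrightarrow> f x > 0"
  shows "expectation f > 0"
proof (rule ccontr)
  assume "\<not> expectation f > 0"
  moreover have "expectation f \<ge> 0" using pos by (intro integral_nonneg_AE AE_I2 less_imp_le) auto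
  ultimately have "AE x in M. f x = 0"
    using assms by (subst integral_nonneg_eq_0_iff_AE[symmetric]) (auto intro!: AE_I2 less_imp_le)
  with AE_space have "AE x in M. False" by eventually_elim (metis pos less_irrefl)
  thus False by simp
qed

lemma (in prob_space) distr_eq_density_of_point_probs:
  fixes X :: "'a \<Rightarrow> 'c :: countable"
  assumes X: "X \<in> measurable M (count_space UNIV)"
    and law: "\<And>k. prob {x \<in> space M. X x = k} = p k"
  shows "distr M (count_space UNIV) X = density (count_space UNIV) (\<lambda>k. ennreal (p k))"
proof (rule measure_eqI_countable[where A=UNIV])
  fix k
  have "emeasure (distr M (count_space UNIV) X) {k} = emeasure M {x \<in> space M. X x = k}"
    by (subst emeasure_distr[OF X]) (auto intro!: arg_cong[where f="emeasure M"])
  also have "\<dots> = ennreal (p k)" by (simp add: emeasure_eq_measure law)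
  finally show "emeasure (distr M (count_space UNIV) X) {k} = emeasure (density (count_space UNIV) (\<lambda>k. ennreal (p k))) {k}"
    by (simp add: emeasure_density nn_integral_count_space_indicator)
qed auto

locale iid_int_walk = prob_space N for N :: "'b measure" +
  fixes \<xi> :: "nat \<Rightarrow> 'b \<Rightarrow> int" and p :: "int \<Rightarrow> real"
  assumes xi_indep: "indep_vars (\<lambda>_. count_space UNIV) \<xi> {1..}"
    and xi_law: "\<And>i k. i \<ge> 1 \<Longrightarrow> prob {y \<in> space N. \<xi> i y = k} = p k"
    and p_sym: "\<And>k. p (-k) = p k"
    and p_sq_summable: "(\<lambda>k. real_of_int k ^ 2 * p k) summable_on UNIV"
    and p_sq_pos: "(\<Sum>\<^sub>\<infinity>k. real_of_int k ^ 2 * p k) > 0"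
begin

lemma xi_measurable: "i \<ge> 1 \<Longrightarrow> \<xi> i \<in> measurable N (count_space UNIV)"
  using xi_indep unfolding indep_vars_def2 by auto

lemma p_nonneg: "p k \<ge> 0"
  using xi_law[of 1 k] by (metis order.refl measure_nonneg)

definition step_law :: "int measure" where
  "step_law = density (count_space UNIV) (\<lambda>k. ennreal (p k))"

lemma distr_xi: "i \<ge> 1 \<Longrightarrow> distr N (count_space UNIV) (\<xi> i) = step_law"
  unfolding step_law_def by (intro distr_eq_density_of_point_probs xi_measurable xi_law)

lemma distr_uminus_xi: "distr N (count_space UNIV) (\<lambda>y. - \<xi> 1 y) = step_law"
  unfolding step_law_def
proof (rule distr_eq_density_of_point_probs)
  show "(\<lambda>y. - \<xi> 1 y) \<in> measurable N (count_space UNIV)"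
    using xi_measurable[of 1] by simp
  show "prob {y \<in> space N. - \<xi> 1 y = k} = p k" for k
    using xi_law[of 1 "-k"] p_sym[of k] by (simp add: minus_equation_iff[of _ k] eq_commute[of "-k"])
qed

lemma integral_xi:
  fixes g :: "int \<Rightarrow> real"
  shows "i \<ge> 1 \<Longrightarrow> (\<integral>y. g (\<xi> i y) \<partial>N) = integral\<^sup>L step_law g"
  using integral_distr[OF xi_measurable, of i g] distr_xi[of i] by simp

lemma integrable_xi_iff:
  fixes g :: "int \<Rightarrow> real"
  shows "i \<ge> 1 \<Longrightarrow> integrable N (\<lambda>y. g (\<xi> i y)) \<longleftrightarrow> integrable step_law g"
  using integrable_distr_eq[OF xi_measurable, of i g] distr_xi[of i] by simp

lemma integrable_step_law_square: "integrable step_law (\<lambda>k. (real_of_int k)\<^sup>2)"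
proof -
  have "(\<lambda>k. norm (p k * (real_of_int k)\<^sup>2)) summable_on UNIV"
    using p_sq_summable p_nonneg by (simp add: abs_mult mult.commute)
  hence "integrable (count_space UNIV) (\<lambda>k. p k * (real_of_int k)\<^sup>2)"
    using abs_summable_equivalent[of "\<lambda>k. p k * (real_of_int k)\<^sup>2" UNIV] unfolding abs_summable_on_def by simp
  thus ?thesis unfolding step_law_def using p_nonneg by (subst integrable_density) auto
qed

lemma step_law_mean: "integral\<^sup>L step_law real_of_int = 0"
proof -
  have "integral\<^sup>L step_law real_of_int = (\<integral>y. real_of_int (- \<xi> 1 y) \<partial>N)"
    unfolding distr_uminus_xi[symmetric] by (subst integral_distr) (use xi_measurable[of 1] in auto)
  also have "\<dots> = - integral\<^sup>L step_law real_of_int"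
    using integral_xi[of 1 real_of_int] by simp
  finally show ?thesis by simp
qed

definition step_variance :: real where
  "step_variance = integral\<^sup>L step_law (\<lambda>k. (real_of_int k)\<^sup>2)"

definition step :: "nat \<Rightarrow> 'b \<Rightarrow> real" where
  "step i y = real_of_int (\<xi> (Suc i) y)"

lemma step_measurable[measurable]: "step i \<in> borel_measurable N"
  using xi_measurable[of "Suc i"] unfolding step_def by measurable

lemma step_indep: "indep_vars (\<lambda>_. borel) step UNIV"
proof -
  have "indep_vars (\<lambda>_. count_space UNIV) (\<lambda>i. \<xi> (Suc i)) UNIV"
    using indep_vars_reindex[OF xi_indep, of Suc UNIV] by auto
  thus ?thesis unfolding step_def[abs_def] by (rule indep_vars_compose2) simp
qed

lemma integrable_step_square: "integrable N (\<lambda>y. (step i y)\<^sup>2)"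
  unfolding step_def using integrable_xi_iff[of "Suc i" "\<lambda>k. (real_of_int k)\<^sup>2"] integrable_step_law_square
  by simp

lemma expectation_step: "expectation (step i) = 0"
  unfolding step_def using integral_xi[of "Suc i" real_of_int] step_law_mean by simp

lemma expectation_step_square: "expectation (\<lambda>y. (step i y)\<^sup>2) = step_variance"
  unfolding step_def step_variance_def using integral_xi[of "Suc i" "\<lambda>k. (real_of_int k)\<^sup>2"] by simp

lemma distr_step: "distr N borel (step n) = distr N borel (step 0)"
proof -
  have "distr N borel (step n) = distr (distr N (count_space UNIV) (\<xi> (Suc n))) borel real_of_int" for n
    unfolding step_def[abs_def] by (subst distr_distr) (auto simp: comp_def intro: xi_measurable)
  thus ?thesis by (simp add: distr_xi)
qed

lemma step_variance_pos: "step_variance > 0"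
proof (rule ccontr)
  assume "\<not> step_variance > 0"
  moreover have "step_variance \<ge> 0" unfolding step_variance_def by simp
  ultimately have "expectation (\<lambda>y. (step 0 y)\<^sup>2) = 0" using expectation_step_square by simp
  hence "AE y in N. (step 0 y)\<^sup>2 = 0"
    using integrable_step_square[of 0] by (subst (asm) integral_nonneg_eq_0_iff_AE) auto
  hence "AE y in N. \<xi> 1 y = 0" by (simp add: step_def)
  hence "p k = 0" if "k \<noteq> 0" for k
  proof -
    have "emeasure N {y \<in> space N. \<xi> 1 y = k} = 0"
      by (rule emeasure_eq_0_AE) (use \<open>AE y in N. \<xi> 1 y = 0\<close> that in \<open>auto elim: AE_mp\<close>)
    thus ?thesis using xi_law[of 1 k] by (simp add: emeasure_eq_measure)
  qed
  hence "(\<lambda>k. real_of_int k ^ 2 * p k) = (\<lambda>_. 0)" by (auto simp: fun_eq_iff)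
  thus False using p_sq_pos by simp
qed

lemma walk_eq_sum_step: "real_of_int (walk \<xi> n y) = (\<Sum>i<n. step i y)"
  by (simp add: walk_def step_def sum.atLeast1_atMost_eq)

lemma walk_measurable: "walk \<xi> n \<in> measurable N (count_space UNIV)"
proof (induction n)
  case 0 thus ?case by (simp add: walk_def)
next
  case (Suc n)
  have "walk \<xi> (Suc n) = (\<lambda>y. walk \<xi> n y + \<xi> (Suc n) y)"
    by (simp add: fun_eq_iff walk_def atLeastAtMostSuc_conv)
  also have "\<dots> \<in> measurable N (count_space UNIV)"
  proof (rule measurable_compose_countable[where f="\<lambda>i y. i + \<xi> (Suc n) y" and g="walk \<xi> n"])
    show "(\<lambda>y. i + \<xi> (Suc n) y) \<in> measurable N (count_space UNIV)" for i :: int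
      using measurable_compose[OF xi_measurable[of "Suc n"], of "\<lambda>k. i + k" "count_space UNIV"] by simp
  qed (rule Suc)
  finally show ?case .
qed

theorem walk_clt:
  "weak_conv_m (\<lambda>n. distr N borel (\<lambda>y. real_of_int (walk \<xi> n y) / sqrt (real n * step_variance)))
     std_normal_distribution"
proof -
  have "(sqrt step_variance)\<^sup>2 = step_variance" using step_variance_pos by simp
  with central_limit_theorem_zero_mean[OF step_indep expectation_step _ integrable_step_square _ distr_step,
      of "sqrt step_variance"]
  show ?thesis using step_variance_pos by (simp add: walk_eq_sum_step expectation_step expectation_step_square)
qed

lemma lim_walk_second_moment:
  "lim (\<lambda>n. integral\<^sup>L N (\<lambda>y. real_of_int (walk \<xi> n y) ^ 2) / real n) = step_variance"
proof (rule limI, rule tendsto_eventually)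
  have second_moment: "integral\<^sup>L N (\<lambda>y. real_of_int (walk \<xi> n y) ^ 2) = real n * step_variance" for n
    using expectation_square_sum_indep[OF step_indep integrable_step_square expectation_step, of n]
    by (simp add: walk_eq_sum_step expectation_step_square)
  show "eventually (\<lambda>n. integral\<^sup>L N (\<lambda>y. real_of_int (walk \<xi> n y) ^ 2) / real n = step_variance) sequentially"
    using eventually_gt_at_top[of "0::nat"] by eventually_elim (simp add: second_moment)
qed

end

theorem proposition3p1:
  fixes M :: "'a measure" and \<zeta> :: "int \<Rightarrow> 'a \<Rightarrow> real" and \<mu> :: real
    and N :: "'b measure" and \<xi> :: "nat \<Rightarrow> 'b \<Rightarrow> int" and p :: "int \<Rightarrow> real" and m2 :: real
  assumes P: "prob_space M"
    and zeta_indep: "prob_space.indep_vars M (\<lambda>_. borel) \<zeta> UNIV"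
    and zeta_ident: "\<And>j. distr M borel (\<zeta> j) = distr M borel (\<zeta> 0)"
    and zeta_pos: "\<And>j x. x \<in> space M \<Longrightarrow> \<zeta> j x > 0"
    and zeta_int: "integrable M (\<zeta> 0)"
    and mu: "\<mu> = integral\<^sup>L M (\<zeta> 0)"
    and Q: "prob_space N"
    and xi_indep: "prob_space.indep_vars N (\<lambda>_. count_space UNIV) \<xi> {1..}"
    and xi_law: "\<And>i k. i \<ge> 1 \<Longrightarrow> measure N {y \<in> space N. \<xi> i y = k} = p k"
    and p_sym: "\<And>k. p (-k) = p k"
    and p_mono: "\<And>k. k \<ge> 0 \<Longrightarrow> p (k + 1) \<le> p k"
    and p_sq_summable: "(\<lambda>k. real_of_int k ^ 2 * p k) summable_on UNIV"
    and p_sq_pos: "(\<Sum>\<^sub>\<infinity>k. real_of_int k ^ 2 * p k) > 0"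
    and m2: "m2 = lim (\<lambda>n. integral\<^sup>L N (\<lambda>y. real_of_int (walk \<xi> n y) ^ 2) / real n)"
  shows "AE x in M. weak_conv_m
           (\<lambda>n. distr N borel (\<lambda>y. env \<zeta> x (walk \<xi> n y) / sqrt (real n)))
           (density lborel (normal_density 0 (sqrt (\<mu>\<^sup>2 * m2))))"
proof -
  interpret P: prob_space M by (rule P)
  interpret Q: iid_int_walk N \<xi> p
    using Q xi_indep xi_law p_sym p_sq_summable p_sq_pos
    by (intro iid_int_walk.intro iid_int_walk_axioms.intro)
  define \<sigma> where "\<sigma> = sqrt Q.step_variance"
  have \<sigma>: "\<sigma> > 0" "\<sigma>\<^sup>2 = Q.step_variance" using Q.step_variance_pos by (auto simp: \<sigma>_def)
  have \<mu>: "\<mu> > 0"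
    unfolding mu using zeta_int zeta_pos by (rule P.expectation_pos)
  have limit_scale: "sqrt (\<mu>\<^sup>2 * m2) = \<mu> * \<sigma>"
    unfolding m2 Q.lim_walk_second_moment \<sigma>(2)[symmetric] using \<mu> \<sigma>(1) by (simp add: real_sqrt_mult)
  have quenched_clt: "weak_conv_m (\<lambda>n. distr N borel (\<lambda>y. env \<zeta> x (walk \<xi> n y) / sqrt (real n)))
      (density lborel (normal_density 0 (\<mu> * \<sigma>)))"
    if "asymptotically_linear \<mu> (env \<zeta> x)" for x
    using Q Q.walk_measurable Q.walk_clt[folded \<sigma>(2)] \<sigma>(1) \<mu> that
    by (rule weak_conv_asymptotically_linear_image)
  have "AE x in M. asymptotically_linear \<mu> (env \<zeta> x)"
    unfolding mu by (rule AE_asymptotically_linear_env[OF P zeta_indep zeta_ident zeta_pos zeta_int])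
  thus ?thesis unfolding limit_scale by eventually_elim (rule quenched_clt)
qed

end
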